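(* Let $T$ be a finite rooted tree in which every inner node has at least two children, with node set $V$ and leaf set $L$. There exists a partition of $V\setminus L$ into four (possibly empty) sets each of which is thin.
   Context: A set $X\subseteq V\setminus L$ of inner nodes is thin if for every $x\in X$ other than the root, the parent of $x$ does not belong to $X$, and $x$ has at least one sibling (possibly a leaf) that does not belong to $X$. *)

theory Defs
  imports Main
begin

text \<open>A finite rooted tree with node set V, root r, and parent function par
  (par v is meaningful only for v in V - {r}; par r is irrelevant).
  Every node reaches the root by iterating par.\<close>
definition rooted_tree :: "'a set \<Rightarrow> 'a \<Rightarrow> ('a \<Rightarrow> 'a) \<Rightarrow> bool" where
  "rooted_tree V r par \<longleftrightarrow> finite V \<and> r \<in> V \<and>
     (\<forall>v \<in> V - {r}. par v \<in> V) \<and>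
     (\<forall>v \<in> V. \<exists>n. (par ^^ n) v = r)"

definition children :: "'a set \<Rightarrow> 'a \<Rightarrow> ('a \<Rightarrow> 'a) \<Rightarrow> 'a \<Rightarrow> 'a set" where
  "children V r par x = {y \<in> V - {r}. par y = x}"

definition leaves :: "'a set \<Rightarrow> 'a \<Rightarrow> ('a \<Rightarrow> 'a) \<Rightarrow> 'a set" where
  "leaves V r par = {x \<in> V. children V r par x = {}}"

definition thin :: "'a set \<Rightarrow> 'a \<Rightarrow> ('a \<Rightarrow> 'a) \<Rightarrow> 'a set \<Rightarrow> bool" where
  "thin V r par X \<longleftrightarrow> X \<subseteq> V - leaves V r par \<and>
     (\<forall>x \<in> X. x \<noteq> r \<longrightarrow>
        par x \<notin> X \<and> (\<exists>s \<in> children V r par (par x). s \<noteq> x \<and> s \<notin> X))"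

end

theory Submission
  imports Defs
begin

text \<open>Colour every node \<open>v\<close> by the pair (parity of the depth of \<open>v\<close>, whether \<open>v\<close> is a fixed
  designated child of its parent). A parent and its child differ in the first coordinate; a
  node and a suitable sibling differ in the second, because every inner node has at least two
  children, one designated and one not. Hence each of the four colour classes of inner nodes
  is thin.\<close>

definition tree_depth :: "'a \<Rightarrow> ('a \<Rightarrow> 'a) \<Rightarrow> 'a \<Rightarrow> nat" where
  "tree_depth r par v = (LEAST n. (par ^^ n) v = r)"

definition designated_child :: "'a set \<Rightarrow> 'a \<Rightarrow> ('a \<Rightarrow> 'a) \<Rightarrow> 'a \<Rightarrow> 'a" where
  "designated_child V r par p = (SOME c. c \<in> children V r par p)"

lemma tree_depth_par:
  assumes "(par ^^ n) v = r" and "v \<noteq> r"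
  shows "tree_depth r par v = Suc (tree_depth r par (par v))"
proof -
  define d where "d = tree_depth r par v"
  have "(par ^^ d) v = r"
    unfolding d_def tree_depth_def using assms(1) by (rule LeastI)
  moreover have "d \<noteq> 0" using calculation assms(2) by (metis funpow_0)
  ultimately obtain m where m: "d = Suc m" and hm: "(par ^^ m) (par v) = r"
    by (metis funpow_Suc_right comp_apply not0_implies_Suc)
  define e where "e = tree_depth r par (par v)"
  have "(par ^^ e) (par v) = r"
    unfolding e_def tree_depth_def using hm by (rule LeastI)
  then have "(par ^^ Suc e) v = r" by (simp only: funpow_Suc_right comp_apply)
  then have "d \<le> Suc e" unfolding d_def tree_depth_def by (rule Least_le)
  moreover have "e \<le> m" unfolding e_def tree_depth_def using hm by (rule Least_le)
  ultimately show ?thesis using m by (simp add: d_def e_def)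
qed

lemma rooted_tree_tree_depth_par:
  assumes "rooted_tree V r par" and "v \<in> V" and "v \<noteq> r"
  shows "tree_depth r par v = Suc (tree_depth r par (par v))"
  using assms tree_depth_par unfolding rooted_tree_def by metis

lemma child_of_par: "v \<in> V - {r} \<Longrightarrow> v \<in> children V r par (par v)"
  unfolding children_def by simp

lemma rooted_tree_par_inner:
  assumes "rooted_tree V r par" and "v \<in> V - {r}"
  shows "par v \<in> V - leaves V r par"
  using assms child_of_par[OF assms(2)] unfolding rooted_tree_def leaves_def by blast

lemma designated_child_in_children:
  "x \<in> children V r par p \<Longrightarrow> designated_child V r par p \<in> children V r par p"
  unfolding designated_child_def by (rule someI)

lemma exists_other_if_card_ge_2:
  assumes "2 \<le> card A"
  shows "\<exists>y\<in>A. y \<noteq> x"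
proof (rule ccontr)
  assume "\<not> ?thesis"
  then have "card A \<le> card {x}" by (intro card_mono) auto
  then show False using assms by simp
qed

definition separating_colouring :: "'a set \<Rightarrow> 'a \<Rightarrow> ('a \<Rightarrow> 'a) \<Rightarrow> ('a \<Rightarrow> 'c) \<Rightarrow> bool" where
  "separating_colouring V r par f \<longleftrightarrow>
     (\<forall>x \<in> V - leaves V r par - {r}.
        f (par x) \<noteq> f x \<and> (\<exists>s \<in> children V r par (par x). s \<noteq> x \<and> f s \<noteq> f x))"

definition depth_designation_colouring :: "'a set \<Rightarrow> 'a \<Rightarrow> ('a \<Rightarrow> 'a) \<Rightarrow> 'a \<Rightarrow> bool \<times> bool" where
  "depth_designation_colouring V r par v =
     (even (tree_depth r par v), v = designated_child V r par (par v))"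

lemma thin_colour_class:
  assumes "separating_colouring V r par f"
  shows "thin V r par {v \<in> V - leaves V r par. f v = c}"
  unfolding thin_def
proof (intro conjI ballI impI)
  fix x assume "x \<in> {v \<in> V - leaves V r par. f v = c}" and "x \<noteq> r"
  then have "f (par x) \<noteq> c" and "\<exists>s \<in> children V r par (par x). s \<noteq> x \<and> f s \<noteq> c"
    using assms unfolding separating_colouring_def by auto
  then show "par x \<notin> {v \<in> V - leaves V r par. f v = c}"
    and "\<exists>s \<in> children V r par (par x). s \<noteq> x \<and> s \<notin> {v \<in> V - leaves V r par. f v = c}"
    by auto
qed auto

lemma separating_colouring_depth_designation:
  assumes tree: "rooted_tree V r par"
    and branching: "\<forall>x \<in> V - leaves V r par. card (children V r par x) \<ge> 2"
  shows "separating_colouring V r par (depth_designation_colouring V r par)"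
  unfolding separating_colouring_def
proof (intro ballI conjI)
  let ?f = "depth_designation_colouring V r par"
  fix x assume "x \<in> V - leaves V r par - {r}"
  then have x: "x \<in> V - {r}" by blast
  have "tree_depth r par x = Suc (tree_depth r par (par x))"
    using rooted_tree_tree_depth_par[OF tree] x by blast
  then show "?f (par x) \<noteq> ?f x" by (simp add: depth_designation_colouring_def)
  let ?C = "children V r par (par x)" and ?c = "designated_child V r par (par x)"
  have xC: "x \<in> ?C" using x by (rule child_of_par)
  have designated_iff: "snd (?f s) \<longleftrightarrow> s = ?c" if "s \<in> ?C" for s
    using that unfolding children_def depth_designation_colouring_def by simp
  show "\<exists>s \<in> ?C. s \<noteq> x \<and> ?f s \<noteq> ?f x"
  proof (cases "x = ?c")
    case True
    have "card ?C \<ge> 2" using branching rooted_tree_par_inner[OF tree x] by simp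
    then obtain s where s: "s \<in> ?C" "s \<noteq> x" using exists_other_if_card_ge_2[of ?C x] by blast
    then have "?f s \<noteq> ?f x" using designated_iff[OF s(1)] designated_iff[OF xC] True by metis
    then show ?thesis using s by blast
  next
    case False
    have c: "?c \<in> ?C" using xC by (rule designated_child_in_children)
    then have "?f ?c \<noteq> ?f x" using designated_iff[OF c] designated_iff[OF xC] False by metis
    then show ?thesis using c False by metis
  qed
qed

theorem lemma3p9:
  fixes V :: "'a set" and r :: 'a and par :: "'a \<Rightarrow> 'a"
  assumes "rooted_tree V r par"
    and "\<forall>x \<in> V - leaves V r par. card (children V r par x) \<ge> 2"
  shows "\<exists>X1 X2 X3 X4.
           X1 \<union> X2 \<union> X3 \<union> X4 = V - leaves V r par \<and>
           X1 \<inter> X2 = {} \<and> X1 \<inter> X3 = {} \<and> X1 \<inter> X4 = {} \<and>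
           X2 \<inter> X3 = {} \<and> X2 \<inter> X4 = {} \<and> X3 \<inter> X4 = {} \<and>
           thin V r par X1 \<and> thin V r par X2 \<and> thin V r par X3 \<and> thin V r par X4"
proof -
  define X where "X c = {v \<in> V - leaves V r par. depth_designation_colouring V r par v = c}"
    for c
  have "thin V r par (X c)" for c
    unfolding X_def
    using separating_colouring_depth_designation[OF assms] by (rule thin_colour_class)
  moreover have "X (True, True) \<union> X (True, False) \<union> X (False, True) \<union> X (False, False)
                   = V - leaves V r par"
    unfolding X_def by (auto simp: prod_eq_iff)
  moreover have "X c \<inter> X d = {}" if "c \<noteq> d" for c d
    unfolding X_def using that by blast
  ultimately show ?thesis
    by (intro exI[of _ "X (True, True)"] exI[of _ "X (True, False)"]
          exI[of _ "X (False, True)"] exI[of _ "X (False, False)"]) simp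
qed

end
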